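(* Let $G$ be a graph on $n$ vertices that has at least two independent (vertex-disjoint) edges. Then $D_{n-1}(G)$ is connected.
   Context: All graphs are finite and simple. A set $S \subseteq V(G)$ is a dominating set of $G$ if every vertex of $V(G)\setminus S$ is adjacent to a vertex of $S$. $\gamma(G)$ is the minimum cardinality of a dominating set of $G$. For an integer $k \ge \gamma(G)$, the $k$-dominating graph $D_k(G)$ is the graph whose vertices are the dominating sets of $G$ of cardinality at most $k$, with two such sets $A,B$ adjacent if and only if their symmetric difference $(A\setminus B)\cup(B\setminus A)$ consists of exactly one vertex of $G$. *)

theory Defs
  imports Main
begin

definition simple_graph :: "'a set \<Rightarrow> ('a \<Rightarrow> 'a \<Rightarrow> bool) \<Rightarrow> bool" where
  "simple_graph V E \<longleftrightarrow> finite V \<and> (\<forall>u v. E u v \<longrightarrow> u \<in> V \<and> v \<in> V)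
     \<and> (\<forall>u v. E u v \<longrightarrow> E v u) \<and> (\<forall>v. \<not> E v v)"

definition dominating_set :: "'a set \<Rightarrow> ('a \<Rightarrow> 'a \<Rightarrow> bool) \<Rightarrow> 'a set \<Rightarrow> bool" where
  "dominating_set V E S \<longleftrightarrow> S \<subseteq> V \<and> (\<forall>v \<in> V - S. \<exists>s \<in> S. E v s)"

definition dom_graph_vertices :: "'a set \<Rightarrow> ('a \<Rightarrow> 'a \<Rightarrow> bool) \<Rightarrow> nat \<Rightarrow> 'a set set" where
  "dom_graph_vertices V E k = {S. dominating_set V E S \<and> card S \<le> k}"

definition dom_graph_adj :: "'a set \<Rightarrow> ('a \<Rightarrow> 'a \<Rightarrow> bool) \<Rightarrow> nat \<Rightarrow> 'a set \<Rightarrow> 'a set \<Rightarrow> bool" where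
  "dom_graph_adj V E k A B \<longleftrightarrow> A \<in> dom_graph_vertices V E k \<and> B \<in> dom_graph_vertices V E k
     \<and> (\<exists>x. (A - B) \<union> (B - A) = {x})"

definition connected_graph :: "'b set \<Rightarrow> ('b \<Rightarrow> 'b \<Rightarrow> bool) \<Rightarrow> bool" where
  "connected_graph W R \<longleftrightarrow> W \<noteq> {} \<and> (\<forall>x \<in> W. \<forall>y \<in> W. R\<^sup>*\<^sup>* x y)"

end

theory Submission
  imports Defs
begin

text \<open>
  Write N = card V and D = D_{N-1}(G).  Every dominating set of size at
  most N - 2 can be enlarged one vertex at a time, so every vertex of D is joined to a
  set of size N - 1, i.e. to a co-singleton V - {x}; since V - {x} dominates, x has a
  neighbour.  Two co-singletons V - {x}, V - {y} are joined through V - {x, y} as soon as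
  x has a neighbour other than y and y has a neighbour other than x ("swap").  Given two
  disjoint edges ab and cd, at most two swaps lead from any V - {x} with x non-isolated
  to V - {a}.  Hence every vertex of D reaches V - {a}, and as adjacency in D is
  symmetric, D is connected.
\<close>

lemma symp_dom_graph_adj: "symp (dom_graph_adj V E k)"
  unfolding symp_def dom_graph_adj_def by (auto simp: Un_commute)

lemma dom_graph_reach_sym:
  "(dom_graph_adj V E k)\<^sup>*\<^sup>* A B \<Longrightarrow> (dom_graph_adj V E k)\<^sup>*\<^sup>* B A"
  using symp_rtranclp[OF symp_dom_graph_adj] by (rule sympD)

lemma dom_graph_adj_insert:
  assumes "S \<in> dom_graph_vertices V E k" and "insert v S \<in> dom_graph_vertices V E k"
    and "v \<notin> S"
  shows "dom_graph_adj V E k S (insert v S)"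
  unfolding dom_graph_adj_def using assms by (intro conjI exI[of _ v]) auto

lemma cosingleton_in_dom_graph:
  assumes g: "simple_graph V E" and "E x w"
  shows "V - {x} \<in> dom_graph_vertices V E (card V - 1)"
proof -
  have "finite V" "x \<in> V" "w \<in> V" "w \<noteq> x"
    using g \<open>E x w\<close> by (auto simp: simple_graph_def)
  then show ?thesis
    using \<open>E x w\<close> by (auto simp: dom_graph_vertices_def dominating_set_def)
qed

text \<open>A vertex of D_{N-1}(G) is joined, by repeatedly adding vertices, to some
  V - {x}; such an x is dominated by V - {x}, hence has a neighbour.\<close>
lemma reaches_cosingleton:
  assumes g: "simple_graph V E" and "V \<noteq> {}"
    and "S \<in> dom_graph_vertices V E (card V - 1)"
  shows "\<exists>x w. E x w \<and> (dom_graph_adj V E (card V - 1))\<^sup>*\<^sup>* S (V - {x})"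
  using assms(3)
proof (induction "card V - 1 - card S" arbitrary: S rule: less_induct)
  case less
  let ?D = "dom_graph_vertices V E (card V - 1)"
  have fin: "finite V" using g by (simp add: simple_graph_def)
  have dS: "dominating_set V E S" and cS: "card S \<le> card V - 1"
    using less.prems by (auto simp: dom_graph_vertices_def)
  have SV: "S \<subseteq> V" using dS by (simp add: dominating_set_def)
  have finS: "finite S" using finite_subset[OF SV fin] .
  have card_diff: "card (V - S) = card V - card S"
    using card_Diff_subset[OF finS SV] .
  show ?case
  proof (cases "card S = card V - 1")
    case True
    have "card V \<noteq> 0" using fin \<open>V \<noteq> {}\<close> by simp
    then have "card (V - S) = 1" using card_diff True by simp
    then obtain x where x: "V - S = {x}" by (auto simp: card_Suc_eq)
    then have "S = V - {x}" and "x \<in> V - S" using SV by auto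
    moreover obtain s where "E x s" using dS \<open>x \<in> V - S\<close> by (auto simp: dominating_set_def)
    ultimately show ?thesis by blast
  next
    case False
    then have lt: "card S < card V - 1" using cS by simp
    then have "V - S \<noteq> {}" using card_diff by fastforce
    then obtain v where v: "v \<in> V" "v \<notin> S" by blast
    have mem: "insert v S \<in> ?D"
      using dS v lt finS by (auto simp: dom_graph_vertices_def dominating_set_def)
    have "card V - 1 - card (insert v S) < card V - 1 - card S" using finS v lt by simp
    from less.hyps[OF this mem] obtain x w where
      "E x w" "(dom_graph_adj V E (card V - 1))\<^sup>*\<^sup>* (insert v S) (V - {x})" by blast
    moreover have "dom_graph_adj V E (card V - 1) S (insert v S)"
      using dom_graph_adj_insert[OF less.prems mem v(2)] .
    ultimately show ?thesis by (meson converse_rtranclp_into_rtranclp)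
  qed
qed

text \<open>The swap: V - {x} and V - {y} are joined through V - {x, y} whenever x has a
  neighbour other than y and y has a neighbour other than x.\<close>
lemma cosingleton_swap:
  assumes g: "simple_graph V E" and "x \<noteq> y"
    and w: "E x w" "w \<noteq> y" and u: "E y u" "u \<noteq> x"
  shows "(dom_graph_adj V E (card V - 1))\<^sup>*\<^sup>* (V - {x}) (V - {y})"
proof -
  let ?D = "dom_graph_vertices V E (card V - 1)"
  have fin: "finite V" using g by (simp add: simple_graph_def)
  have mx: "V - {x} \<in> ?D" using cosingleton_in_dom_graph[OF g w(1)] .
  have my: "V - {y} \<in> ?D" using cosingleton_in_dom_graph[OF g u(1)] .
  have "x \<in> V" "w \<in> V" "w \<noteq> x" "u \<in> V" "u \<noteq> y"
    using g w u by (auto simp: simple_graph_def)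
  then have "dominating_set V E (V - {x, y})"
    using w u by (auto simp: dominating_set_def)
  moreover have "card (V - {x, y}) \<le> card (V - {x})"
    using fin by (intro card_mono) auto
  ultimately have mxy: "V - {x, y} \<in> ?D"
    using mx by (auto simp: dom_graph_vertices_def)
  have "V - {x} = insert y (V - {x, y})" and "V - {y} = insert x (V - {x, y})"
    using \<open>x \<noteq> y\<close> \<open>x \<in> V\<close> u g by (auto simp: simple_graph_def)
  then have "dom_graph_adj V E (card V - 1) (V - {x, y}) (V - {x})"
    and "dom_graph_adj V E (card V - 1) (V - {x, y}) (V - {y})"
    using dom_graph_adj_insert[OF mxy, of y] dom_graph_adj_insert[OF mxy, of x] mx my
    by auto
  then show ?thesis
    by (meson dom_graph_reach_sym r_into_rtranclp rtranclp_trans)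
qed

text \<open>Given an edge cd, a co-singleton V - {x} of a non-isolated vertex x reaches
  V - {c} or V - {d} by one swap (or is one of them already).\<close>
lemma reaches_edge_end:
  assumes g: "simple_graph V E" and "E c d" and "E x w"
  shows "(dom_graph_adj V E (card V - 1))\<^sup>*\<^sup>* (V - {x}) (V - {c})
    \<or> (dom_graph_adj V E (card V - 1))\<^sup>*\<^sup>* (V - {x}) (V - {d})"
proof -
  have sym: "E d c" and "c \<noteq> d" and "x \<noteq> w"
    using g \<open>E c d\<close> \<open>E x w\<close> by (auto simp: simple_graph_def)
  consider "x = c" | "x = d" | "x \<noteq> c" "x \<noteq> d" "w \<noteq> c" | "x \<noteq> c" "x \<noteq> d" "w = c"
    by blast
  then show ?thesis
  proof cases
    case 3
    then show ?thesis using cosingleton_swap[OF g _ \<open>E x w\<close> _ \<open>E c d\<close>] by auto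
  next
    case 4
    then show ?thesis using cosingleton_swap[OF g _ \<open>E x w\<close> _ sym] \<open>c \<noteq> d\<close> by auto
  qed auto
qed

text \<open>With two disjoint edges ab and cd, every co-singleton of a non-isolated vertex
  reaches V - {a}: first route it to an end of cd, then swap with a.\<close>
lemma reaches_fixed_cosingleton:
  assumes g: "simple_graph V E" and ab: "E a b" and cd: "E c d"
    and disj: "{a, b} \<inter> {c, d} = {}" and "E x w"
  shows "(dom_graph_adj V E (card V - 1))\<^sup>*\<^sup>* (V - {x}) (V - {a})"
proof -
  have "E d c" using g cd by (simp add: simple_graph_def)
  then have "(dom_graph_adj V E (card V - 1))\<^sup>*\<^sup>* (V - {c}) (V - {a})"
    and "(dom_graph_adj V E (card V - 1))\<^sup>*\<^sup>* (V - {d}) (V - {a})"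
    using cosingleton_swap[OF g _ cd _ ab] cosingleton_swap[OF g _ \<open>E d c\<close> _ ab] disj
    by auto
  then show ?thesis
    using reaches_edge_end[OF g cd \<open>E x w\<close>] by (meson rtranclp_trans)
qed

theorem lemma2:
  fixes V :: "'a set" and E :: "'a \<Rightarrow> 'a \<Rightarrow> bool" and n :: nat
  assumes "simple_graph V E"
    and "card V = n"
    and "\<exists>a b c d. E a b \<and> E c d \<and> {a, b} \<inter> {c, d} = {}"
  shows "connected_graph (dom_graph_vertices V E (n - 1)) (dom_graph_adj V E (n - 1))"
proof -
  let ?D = "dom_graph_vertices V E (card V - 1)"
  let ?R = "dom_graph_adj V E (card V - 1)"
  obtain a b c d where ab: "E a b" and cd: "E c d" and disj: "{a, b} \<inter> {c, d} = {}"
    using assms(3) by blast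
  have nonempty: "V \<noteq> {}" using assms(1) ab by (auto simp: simple_graph_def)
  have hub: "?R\<^sup>*\<^sup>* S (V - {a})" if S: "S \<in> ?D" for S
  proof -
    obtain x w where "E x w" "?R\<^sup>*\<^sup>* S (V - {x})"
      using reaches_cosingleton[OF assms(1) nonempty S] by blast
    then show ?thesis
      using reaches_fixed_cosingleton[OF assms(1) ab cd disj] by (meson rtranclp_trans)
  qed
  have "V - {a} \<in> ?D" using cosingleton_in_dom_graph[OF assms(1) ab] .
  moreover have "?R\<^sup>*\<^sup>* S T" if "S \<in> ?D" "T \<in> ?D" for S T
    using hub[OF that(1)] dom_graph_reach_sym[OF hub[OF that(2)]] by (rule rtranclp_trans)
  ultimately show ?thesis
    unfolding connected_graph_def assms(2)[symmetric] by blast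
qed

end
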